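(* Let $Q$ be a quiver and $C\subseteq\Bbbk Q$ a subcoalgebra, with tail closure $T(C)$. Every finite dimensional right coideal of $T(C)$ is contained in the right coideal $\langle q_F\rangle^{T(C)}$ generated by an element of the form $q_F$, for some $n\ge 0$ and some finite independent set $F\subseteq M(T^n(C))$.
   Context: $\Bbbk$ is a field. Paths of $Q$ include trivial paths (vertices); concatenation $xy$ is defined when the target of $x$ is the source of $y$, extended bilinearly. The path coalgebra $\Bbbk Q$ has basis all paths, $\Delta(p)=\sum_{xy=p}x\otimes y$, $\varepsilon(p)=1$ if $p$ trivial and $0$ otherwise. A right coideal of a coalgebra $D$ is a subspace $I$ with $\Delta(I)\subseteq I\otimes D$; $\langle x\rangle^D$ is the smallest right coideal of $D$ containing $x$. A multipath is a nonzero linear combination of paths with common source $s(p)$ and common target $t(p)$; $M(D)$ is the set of multipaths in $D$; $F\subseteq M(D)$ is independent if it is linearly independent and $\langle x\rangle^D\cap F=\{x\}$ for each $x\in F$. Tail closure: for a subcoalgebra $D$ of a path coalgebra $\Bbbk R$, let $\overline{R}$ be obtained from $R$ by adding, for each finite independent $F=\{p_1,\dots,p_n\}\subseteq M(D)$, a new vertex $e_F$ and new arrows $\alpha_{i,F}:t(p_i)\to e_F$; put $q_F=\sum_i p_i\alpha_{i,F}\in\Bbbk\overline{R}$ and let $\overline{D}\subseteq\Bbbk\overline{R}$ be the subcoalgebra generated by $D$ and all $q_F$. Set $T^0(C)=C$, $T^{n+1}(C)=\overline{T^n(C)}$ (over the quivers $T^0(Q)=Q$, $T^{n+1}(Q)=\overline{T^n(Q)}$),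 and $T(C)=\bigcup_nT^n(C)$; thus for finite independent $F\subseteq M(T^n(C))$, $q_F\in T^{n+1}(C)\subseteq T(C)$. *)

theory Defs
  imports Main "HOL-Library.FSet"
begin

text \<open>A quiver is given by a vertex set V :: 'v set, an arrow set A :: 'a set and
source/target maps s t :: 'a => 'v.  A path is a pair (v, as) of a starting vertex
and a list of arrows; (v, []) is the trivial path at v.  Elements of the path
coalgebra are finitely supported functions from paths to the field.\<close>

fun chain_from :: "('a \<Rightarrow> 'v) \<Rightarrow> ('a \<Rightarrow> 'v) \<Rightarrow> 'v \<Rightarrow> 'a list \<Rightarrow> bool" where
  "chain_from s t v [] = True"
| "chain_from s t v (a # as) = (s a = v \<and> chain_from s t (t a) as)"

definition is_path :: "'v set \<Rightarrow> 'a set \<Rightarrow> ('a \<Rightarrow> 'v) \<Rightarrow> ('a \<Rightarrow> 'v) \<Rightarrow> 'v \<times> 'a list \<Rightarrow> bool" where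
  "is_path V A s t p = (fst p \<in> V \<and> set (snd p) \<subseteq> A \<and> chain_from s t (fst p) (snd p))"

definition psrc :: "'v \<times> 'a list \<Rightarrow> 'v" where
  "psrc p = fst p"

definition ptgt :: "('a \<Rightarrow> 'v) \<Rightarrow> 'v \<times> 'a list \<Rightarrow> 'v" where
  "ptgt t p = (if snd p = [] then fst p else t (last (snd p)))"

text \<open>concatenation xy (used only when ptgt x = psrc y)\<close>
definition pcat :: "'v \<times> 'a list \<Rightarrow> 'v \<times> 'a list \<Rightarrow> 'v \<times> 'a list" where
  "pcat x y = (fst x, snd x @ snd y)"

definition fin_supp :: "('b \<Rightarrow> 'k::zero) \<Rightarrow> bool" where
  "fin_supp f = finite {x. f x \<noteq> 0}"

text \<open>the path coalgebra kQ as a set of vectors\<close>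
definition pathvec :: "'v set \<Rightarrow> 'a set \<Rightarrow> ('a \<Rightarrow> 'v) \<Rightarrow> ('a \<Rightarrow> 'v)
    \<Rightarrow> ('v \<times> 'a list \<Rightarrow> 'k::zero) set" where
  "pathvec V A s t = {x. fin_supp x \<and> (\<forall>p. x p \<noteq> 0 \<longrightarrow> is_path V A s t p)}"

text \<open>Comultiplication Delta(p) = sum over xy = p of x (x) y, extended linearly;
elements of kQ (x) kQ are represented as finitely supported functions on pairs of paths.\<close>
definition comult :: "('a \<Rightarrow> 'v) \<Rightarrow> ('v \<times> 'a list \<Rightarrow> 'k::zero)
    \<Rightarrow> ('v \<times> 'a list) \<times> ('v \<times> 'a list) \<Rightarrow> 'k" where
  "comult t x uw = (if ptgt t (fst uw) = psrc (snd uw) then x (pcat (fst uw) (snd uw)) else 0)"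

definition lspan :: "('b \<Rightarrow> 'k::field) set \<Rightarrow> ('b \<Rightarrow> 'k) set" where
  "lspan S = {f. \<exists>B c. finite B \<and> B \<subseteq> S \<and> f = (\<lambda>u. \<Sum>b\<in>B. c b * b u)}"

definition subspace :: "('b \<Rightarrow> 'k::field) set \<Rightarrow> bool" where
  "subspace S = ((\<lambda>u. 0) \<in> S \<and> (\<forall>x\<in>S. \<forall>y\<in>S. (\<lambda>u. x u + y u) \<in> S)
      \<and> (\<forall>c. \<forall>x\<in>S. (\<lambda>u. c * x u) \<in> S))"

definition lin_indep :: "('b \<Rightarrow> 'k::field) set \<Rightarrow> bool" where
  "lin_indep S = (\<forall>B c. finite B \<and> B \<subseteq> S \<and> (\<forall>u. (\<Sum>b\<in>B. c b * b u) = 0)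
      \<longrightarrow> (\<forall>b\<in>B. c b = 0))"

definition fin_dim :: "('b \<Rightarrow> 'k::field) set \<Rightarrow> bool" where
  "fin_dim S = (\<exists>B. finite B \<and> S = lspan B)"

text \<open>tensor product U (x) W of subspaces, inside the functions on pairs\<close>
definition tensor :: "('b \<Rightarrow> 'k::field) set \<Rightarrow> ('c \<Rightarrow> 'k) set \<Rightarrow> ('b \<times> 'c \<Rightarrow> 'k) set" where
  "tensor U W = lspan {(\<lambda>(u, w). a u * b w) | a b. a \<in> U \<and> b \<in> W}"

definition subcoalgebra :: "('a \<Rightarrow> 'v) \<Rightarrow> ('v \<times> 'a list \<Rightarrow> 'k::field) set
    \<Rightarrow> ('v \<times> 'a list \<Rightarrow> 'k) set \<Rightarrow> bool" where
  "subcoalgebra t K S = (subspace S \<and> S \<subseteq> K \<and> (\<forall>x\<in>S. comult t x \<in> tensor S S))"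

definition gen_subcoalg :: "('a \<Rightarrow> 'v) \<Rightarrow> ('v \<times> 'a list \<Rightarrow> 'k::field) set
    \<Rightarrow> ('v \<times> 'a list \<Rightarrow> 'k) set \<Rightarrow> ('v \<times> 'a list \<Rightarrow> 'k) set" where
  "gen_subcoalg t K G = \<Inter> {S. subcoalgebra t K S \<and> G \<subseteq> S}"

definition right_coideal :: "('a \<Rightarrow> 'v) \<Rightarrow> ('v \<times> 'a list \<Rightarrow> 'k::field) set
    \<Rightarrow> ('v \<times> 'a list \<Rightarrow> 'k) set \<Rightarrow> bool" where
  "right_coideal t D I = (subspace I \<and> I \<subseteq> D \<and> (\<forall>x\<in>I. comult t x \<in> tensor I D))"

definition coideal_gen :: "('a \<Rightarrow> 'v) \<Rightarrow> ('v \<times> 'a list \<Rightarrow> 'k::field) set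
    \<Rightarrow> ('v \<times> 'a list \<Rightarrow> 'k) \<Rightarrow> ('v \<times> 'a list \<Rightarrow> 'k) set" where
  "coideal_gen t D x = \<Inter> {I. right_coideal t D I \<and> x \<in> I}"

text \<open>multipath: nonzero linear combination of paths with common source and target
(D is always a subspace of a path coalgebra, so its elements are combinations of paths)\<close>
definition multipath :: "('a \<Rightarrow> 'v) \<Rightarrow> ('v \<times> 'a list \<Rightarrow> 'k::field) \<Rightarrow> bool" where
  "multipath t x = (x \<noteq> (\<lambda>u. 0) \<and> fin_supp x \<and>
     (\<exists>v w. \<forall>p. x p \<noteq> 0 \<longrightarrow> psrc p = v \<and> ptgt t p = w))"

definition MP :: "('a \<Rightarrow> 'v) \<Rightarrow> ('v \<times> 'a list \<Rightarrow> 'k::field) set \<Rightarrow> ('v \<times> 'a list \<Rightarrow> 'k) set" where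
  "MP t D = {x \<in> D. multipath t x}"

definition independent :: "('a \<Rightarrow> 'v) \<Rightarrow> ('v \<times> 'a list \<Rightarrow> 'k::field) set
    \<Rightarrow> ('v \<times> 'a list \<Rightarrow> 'k) set \<Rightarrow> bool" where
  "independent t D F = (F \<subseteq> MP t D \<and> lin_indep F \<and> (\<forall>x\<in>F. coideal_gen t D x \<inter> F = {x}))"

text \<open>Vertices/arrows: the original ones (OV, OA) plus the new ones.  NV n F is the vertex
e_F added at step n+1 for a finite independent F in M(T^n(C)); NA n p F is the arrow
alpha_{i,F} : t(p_i) -> e_F for p = p_i in F.  Multipaths are encoded by their graph
(a finite set of (path, nonzero coefficient) pairs), sets F by the finite set of encodings.\<close>

datatype ('v, 'a, 'k) vtx =
    OV 'v
  | NV nat "((('v, 'a, 'k) vtx \<times> ('v, 'a, 'k) arr list) \<times> 'k) fset fset"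
and ('v, 'a, 'k) arr =
    OA 'a
  | NA nat "((('v, 'a, 'k) vtx \<times> ('v, 'a, 'k) arr list) \<times> 'k) fset"
           "((('v, 'a, 'k) vtx \<times> ('v, 'a, 'k) arr list) \<times> 'k) fset fset"

type_synonym ('v, 'a, 'k) bpath = "('v, 'a, 'k) vtx \<times> ('v, 'a, 'k) arr list"

definition enc :: "(('v, 'a, 'k) bpath \<Rightarrow> 'k::zero) \<Rightarrow> (('v, 'a, 'k) bpath \<times> 'k) fset" where
  "enc x = Abs_fset {(p, x p) | p. x p \<noteq> 0}"

definition encF :: "(('v, 'a, 'k) bpath \<Rightarrow> 'k::zero) set \<Rightarrow> (('v, 'a, 'k) bpath \<times> 'k) fset fset" where
  "encF F = Abs_fset (enc ` F)"

fun XT :: "('a \<Rightarrow> 'v) \<Rightarrow> ('v, 'a, 'k) arr \<Rightarrow> ('v, 'a, 'k) vtx" where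
  "XT t (OA a) = OV (t a)"
| "XT t (NA n P F) = NV n F"

text \<open>source of alpha_{i,F}: the common target of the paths of p_i\<close>
fun XS :: "('a \<Rightarrow> 'v) \<Rightarrow> ('a \<Rightarrow> 'v) \<Rightarrow> ('v, 'a, 'k) arr \<Rightarrow> ('v, 'a, 'k) vtx" where
  "XS s t (OA a) = OV (s a)"
| "XS s t (NA n P F) = ptgt (XT t) (fst (SOME z. z |\<in>| P))"

text \<open>q_F = sum_i p_i alpha_{i,F}, for F created at step n+1\<close>
definition qF :: "nat \<Rightarrow> (('v, 'a, 'k) bpath \<Rightarrow> 'k::field) set \<Rightarrow> ('v, 'a, 'k) bpath \<Rightarrow> 'k" where
  "qF n F r = (\<Sum>p\<in>F. if snd r \<noteq> [] \<and> last (snd r) = NA n (enc p) (encF F)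
                      then p (fst r, butlast (snd r)) else 0)"

text \<open>embedding of kQ into the ambient path coalgebra\<close>
definition liftQ :: "('v \<times> 'a list \<Rightarrow> 'k::zero) \<Rightarrow> ('v, 'a, 'k) bpath \<Rightarrow> 'k" where
  "liftQ x p = (if \<exists>v bs. p = (OV v, map OA bs)
                then x (SOME vb. p = (OV (fst vb), map OA (snd vb))) else 0)"

text \<open>TT s t V A C n = (vertices of T^n(Q), arrows of T^n(Q), T^n(C))\<close>
primrec TT :: "('a \<Rightarrow> 'v) \<Rightarrow> ('a \<Rightarrow> 'v) \<Rightarrow> 'v set \<Rightarrow> 'a set \<Rightarrow> ('v \<times> 'a list \<Rightarrow> 'k::field) set
    \<Rightarrow> nat \<Rightarrow> ('v, 'a, 'k) vtx set \<times> ('v, 'a, 'k) arr set \<times> (('v, 'a, 'k) bpath \<Rightarrow> 'k) set" where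
  "TT s t V A C 0 = (OV ` V, OA ` A, liftQ ` C)"
| "TT s t V A C (Suc n) =
     (let Vn = fst (TT s t V A C n); An = fst (snd (TT s t V A C n)); Dn = snd (snd (TT s t V A C n));
          Fs = {F. finite F \<and> independent (XT t) Dn F};
          V' = Vn \<union> {NV n (encF F) | F. F \<in> Fs};
          A' = An \<union> {NA n (enc p) (encF F) | F p. F \<in> Fs \<and> p \<in> F}
      in (V', A', gen_subcoalg (XT t) (pathvec V' A' (XS s t) (XT t)) (Dn \<union> {qF n F | F. F \<in> Fs})))"

definition TCn :: "('a \<Rightarrow> 'v) \<Rightarrow> ('a \<Rightarrow> 'v) \<Rightarrow> 'v set \<Rightarrow> 'a set \<Rightarrow> ('v \<times> 'a list \<Rightarrow> 'k::field) set
    \<Rightarrow> nat \<Rightarrow> (('v, 'a, 'k) bpath \<Rightarrow> 'k) set" where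
  "TCn s t V A C n = snd (snd (TT s t V A C n))"

definition TC :: "('a \<Rightarrow> 'v) \<Rightarrow> ('a \<Rightarrow> 'v) \<Rightarrow> 'v set \<Rightarrow> 'a set \<Rightarrow> ('v \<times> 'a list \<Rightarrow> 'k::field) set
    \<Rightarrow> (('v, 'a, 'k) bpath \<Rightarrow> 'k) set" where
  "TC s t V A C = (\<Union>n. TCn s t V A C n)"

end

theory Submission
  imports Defs
begin

text \<open>A finite-dimensional right coideal I of T(C) is spanned by finitely many elements, which
  already lie in some T^N(C), a subcoalgebra of a path coalgebra. Splitting each of them by the
  endpoints of its paths writes it as a sum of multipaths of T^N(C). Among these, keep a subset F
  that is irredundant: no member lies in the right coideal generated by the others; the right
  coideals generated by F still contain everything, and irredundancy is exactly independence.
  Finally each p in F is the right quotient of q_F by the new arrow attached to p, so every right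
  coideal containing q_F contains F, hence the right coideals it generates, hence I.\<close>

section \<open>Spans and tensor products of function spaces\<close>

lemma subspace_zero: "subspace S \<Longrightarrow> (\<lambda>u. 0) \<in> S"
  and subspace_add: "subspace S \<Longrightarrow> x \<in> S \<Longrightarrow> y \<in> S \<Longrightarrow> (\<lambda>u. x u + y u) \<in> S"
  and subspace_scale: "subspace S \<Longrightarrow> x \<in> S \<Longrightarrow> (\<lambda>u. c * x u) \<in> S"
  by (simp_all add: subspace_def)

lemma subspace_sum:
  assumes "subspace S" "finite K" "\<forall>i\<in>K. g i \<in> S"
  shows "(\<lambda>u. \<Sum>i\<in>K. g i u) \<in> S"
  using assms(2,3)
proof (induction K rule: finite_induct)
  case empty
  then show ?case using assms(1) by (simp add: subspace_zero)
next
  case (insert x F)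
  then have "(\<lambda>u. g x u + (\<Sum>i\<in>F. g i u)) \<in> S"
    by (intro subspace_add[OF assms(1)]) simp_all
  with insert(1,2) show ?case by simp
qed

lemma subspace_lincomb:
  assumes "subspace S" "finite K" "\<forall>i\<in>K. g i \<in> S"
  shows "(\<lambda>u. \<Sum>i\<in>K. c i * g i u) \<in> S"
  by (rule subspace_sum[OF assms(1,2), of "\<lambda>i u. c i * g i u", simplified])
    (use assms(3) subspace_scale[OF assms(1)] in blast)

lemma lspanI: "finite B \<Longrightarrow> B \<subseteq> X \<Longrightarrow> f = (\<lambda>u. \<Sum>b\<in>B. c b * b u) \<Longrightarrow> f \<in> lspan X"
  unfolding lspan_def by blast

lemma lspanE:
  assumes "f \<in> lspan X"
  obtains B c where "finite B" "B \<subseteq> X" "f = (\<lambda>u. \<Sum>b\<in>B. c b * b u)"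
  using assms unfolding lspan_def by blast

lemma lspan_superset: "x \<in> X \<Longrightarrow> x \<in> lspan X"
  by (rule lspanI[of "{x}" _ _ "\<lambda>_. 1"]) simp_all

lemma lspan_least:
  assumes "subspace S" "X \<subseteq> S"
  shows "lspan X \<subseteq> S"
proof
  fix f assume "f \<in> lspan X"
  then obtain B c where "finite B" "B \<subseteq> X" "f = (\<lambda>u. \<Sum>b\<in>B. c b * b u)" by (rule lspanE)
  then show "f \<in> S" using subspace_lincomb[OF assms(1), of B id c] assms(2) by auto
qed

lemma subspace_lspan: "subspace (lspan X)"
  unfolding subspace_def
proof (intro conjI ballI allI)
  show "(\<lambda>u. 0) \<in> lspan X" by (rule lspanI[of "{}"]) simp_all
next
  fix x y assume x: "x \<in> lspan X" and y: "y \<in> lspan X"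
  obtain B1 c1 where 1: "finite B1" "B1 \<subseteq> X" "x = (\<lambda>u. \<Sum>b\<in>B1. c1 b * b u)"
    using x by (rule lspanE)
  obtain B2 c2 where 2: "finite B2" "B2 \<subseteq> X" "y = (\<lambda>u. \<Sum>b\<in>B2. c2 b * b u)"
    using y by (rule lspanE)
  define c where "c b = (if b \<in> B1 then c1 b else 0) + (if b \<in> B2 then c2 b else 0)" for b
  have "(\<Sum>b\<in>B1 \<union> B2. c b * b u) = x u + y u" for u
  proof -
    have "(\<Sum>b\<in>B1 \<union> B2. (if b \<in> B1 then c1 b else 0) * b u) = (\<Sum>b\<in>B1. c1 b * b u)"
      by (rule sum.mono_neutral_cong_right) (use 1 2 in auto)
    moreover have "(\<Sum>b\<in>B1 \<union> B2. (if b \<in> B2 then c2 b else 0) * b u) = (\<Sum>b\<in>B2. c2 b * b u)"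
      by (rule sum.mono_neutral_cong_right) (use 1 2 in auto)
    ultimately show ?thesis by (simp add: c_def distrib_right sum.distrib 1(3) 2(3))
  qed
  then show "(\<lambda>u. x u + y u) \<in> lspan X"
    by (intro lspanI[of "B1 \<union> B2" _ _ c]) (use 1 2 in auto)
next
  fix a x assume "x \<in> lspan X"
  then obtain B c where "finite B" "B \<subseteq> X" "x = (\<lambda>u. \<Sum>b\<in>B. c b * b u)" by (rule lspanE)
  then show "(\<lambda>u. a * x u) \<in> lspan X"
    by (intro lspanI[of B _ _ "\<lambda>b. a * c b"]) (auto simp: sum_distrib_left mult.assoc)
qed

lemma lspan_mono: "X \<subseteq> Y \<Longrightarrow> lspan X \<subseteq> lspan Y"
  by (rule lspan_least[OF subspace_lspan]) (auto intro: lspan_superset)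

lemma tensor_pure: "a \<in> U \<Longrightarrow> b \<in> W \<Longrightarrow> (\<lambda>(u, w). a u * b w) \<in> tensor U W"
  unfolding tensor_def by (rule lspan_superset) blast

lemma subspace_tensor: "subspace (tensor U W)"
  unfolding tensor_def by (rule subspace_lspan)

lemma tensor_sum:
  assumes "finite K" "\<forall>i\<in>K. a i \<in> U \<and> b i \<in> W"
  shows "(\<lambda>(u, w). \<Sum>i\<in>K. a i u * b i w) \<in> tensor U W"
proof -
  have "(\<lambda>uw. \<Sum>i\<in>K. (\<lambda>(u, w). a i u * b i w) uw) \<in> tensor U W"
    by (rule subspace_sum[OF subspace_tensor assms(1)]) (use assms(2) tensor_pure in blast)
  moreover have "(\<lambda>uw. \<Sum>i\<in>K. (\<lambda>(u, w). a i u * b i w) uw) = (\<lambda>(u, w). \<Sum>i\<in>K. a i u * b i w)"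
    by (auto simp: fun_eq_iff)
  ultimately show ?thesis by simp
qed

lemma tensor_obtain_sum:
  fixes U :: "('b \<Rightarrow> 'k::field) set" and W :: "('c \<Rightarrow> 'k) set"
  assumes "subspace U" "z \<in> tensor U W"
  obtains K :: "('b \<times> 'c \<Rightarrow> 'k) set" and a b
  where "finite K" "\<forall>i\<in>K. a i \<in> U \<and> b i \<in> W" "z = (\<lambda>(u, w). \<Sum>i\<in>K. a i u * b i w)"
proof -
  obtain B c where B: "finite B" "B \<subseteq> {(\<lambda>(u, w). a u * b w) | a b. a \<in> U \<and> b \<in> W}"
      "z = (\<lambda>u. \<Sum>b\<in>B. c b * b u)"
    using assms(2) unfolding tensor_def by (rule lspanE)
  have ex: "\<forall>g\<in>B. \<exists>ab. fst ab \<in> U \<and> snd ab \<in> W \<and> g = (\<lambda>(u, w). fst ab u * snd ab w)"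
  proof
    fix g assume "g \<in> B"
    then obtain a b where "a \<in> U" "b \<in> W" "g = (\<lambda>(u, w). a u * b w)" using B(2) by blast
    then show "\<exists>ab. fst ab \<in> U \<and> snd ab \<in> W \<and> g = (\<lambda>(u, w). fst ab u * snd ab w)"
      by (intro exI[of _ "(a, b)"]) simp
  qed
  obtain ab where ab: "\<forall>g\<in>B. fst (ab g) \<in> U \<and> snd (ab g) \<in> W
      \<and> g = (\<lambda>(u, w). fst (ab g) u * snd (ab g) w)"
    using bchoice[OF ex] by blast
  define a where "a g = (\<lambda>u. c g * fst (ab g) u)" for g
  define b where "b g = snd (ab g)" for g
  have factors: "\<forall>i\<in>B. a i \<in> U \<and> b i \<in> W"
    using ab subspace_scale[OF assms(1)] by (auto simp: a_def b_def)
  have "z = (\<lambda>(u, w). \<Sum>i\<in>B. a i u * b i w)"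
  proof -
    have "c g * g (u, w) = a g u * b g w" if "g \<in> B" for g u w
    proof -
      have "g (u, w) = fst (ab g) u * snd (ab g) w" using ab that by (metis case_prod_conv)
      then show ?thesis by (simp add: a_def b_def mult.assoc)
    qed
    then show ?thesis unfolding B(3) by (auto simp: fun_eq_iff intro: sum.cong)
  qed
  then show ?thesis by (rule that[OF B(1) factors])
qed

lemma tensor_slice_left:
  fixes U :: "('b \<Rightarrow> 'k::field) set" and W :: "('c \<Rightarrow> 'k) set"
  assumes "subspace U" "z \<in> tensor U W"
  shows "(\<lambda>u. z (u, r)) \<in> U"
proof -
  obtain K :: "('b \<times> 'c \<Rightarrow> 'k::field) set" and a b
    where K: "finite K" "\<forall>i\<in>K. a i \<in> U \<and> b i \<in> W" "z = (\<lambda>(u, w). \<Sum>i\<in>K. a i u * b i w)"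
    by (rule tensor_obtain_sum[OF assms])
  have "(\<lambda>u. \<Sum>i\<in>K. b i r * a i u) \<in> U"
    by (rule subspace_lincomb[OF assms(1) K(1)]) (use K in auto)
  then show ?thesis using K(3) by (simp add: mult.commute)
qed

lemma tensor_slice_right:
  fixes U :: "('b \<Rightarrow> 'k::field) set" and W :: "('c \<Rightarrow> 'k) set"
  assumes "subspace U" "subspace W" "z \<in> tensor U W"
  shows "(\<lambda>w. z (r, w)) \<in> W"
proof -
  obtain K :: "('b \<times> 'c \<Rightarrow> 'k::field) set" and a b
    where K: "finite K" "\<forall>i\<in>K. a i \<in> U \<and> b i \<in> W" "z = (\<lambda>(u, w). \<Sum>i\<in>K. a i u * b i w)"
    by (rule tensor_obtain_sum[OF assms(1,3)])
  have "(\<lambda>w. \<Sum>i\<in>K. a i r * b i w) \<in> W"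
    by (rule subspace_lincomb[OF assms(2) K(1)]) (use K in auto)
  then show ?thesis using K(3) by simp
qed

lemma tensor_swap:
  fixes U :: "('b \<Rightarrow> 'k::field) set" and W :: "('c \<Rightarrow> 'k) set"
  assumes "subspace U" "z \<in> tensor U W"
  shows "(\<lambda>(w, u). z (u, w)) \<in> tensor W U"
proof -
  obtain K :: "('b \<times> 'c \<Rightarrow> 'k::field) set" and a b
    where K: "finite K" "\<forall>i\<in>K. a i \<in> U \<and> b i \<in> W" "z = (\<lambda>(u, w). \<Sum>i\<in>K. a i u * b i w)"
    by (rule tensor_obtain_sum[OF assms])
  have "(\<lambda>(w, u). \<Sum>i\<in>K. b i w * a i u) \<in> tensor W U"
    by (rule tensor_sum) (use K in auto)
  moreover have "(\<lambda>(w, u). z (u, w)) = (\<lambda>(w, u). \<Sum>i\<in>K. b i w * a i u)"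
    using K(3) by (auto simp: fun_eq_iff mult.commute)
  ultimately show ?thesis by simp
qed

lemma sum_pivot:
  fixes a b c :: "'i \<Rightarrow> 'k::field"
  assumes "finite K" "k \<in> K" "c k \<noteq> 0"
  shows "(\<Sum>i\<in>K. a i * b i)
    = (\<Sum>i\<in>K-{k}. a i * (b i - (c i / c k) * b k)) + (inverse (c k) * (\<Sum>i\<in>K. a i * c i)) * b k"
proof -
  have s1: "(\<Sum>i\<in>K. a i * b i) = a k * b k + (\<Sum>i\<in>K-{k}. a i * b i)"
    using assms by (simp add: sum.remove)
  have s2: "(\<Sum>i\<in>K. a i * c i) = a k * c k + (\<Sum>i\<in>K-{k}. a i * c i)"
    using assms by (simp add: sum.remove)
  have "(\<Sum>i\<in>K-{k}. a i * (b i - (c i / c k) * b k))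
      = (\<Sum>i\<in>K-{k}. a i * b i - inverse (c k) * b k * (a i * c i))"
    by (rule sum.cong) (simp_all add: field_simps)
  also have "\<dots> = (\<Sum>i\<in>K-{k}. a i * b i) - inverse (c k) * b k * (\<Sum>i\<in>K-{k}. a i * c i)"
    by (simp add: sum_subtractf sum_distrib_left)
  finally have s3: "(\<Sum>i\<in>K-{k}. a i * (b i - (c i / c k) * b k))
      = (\<Sum>i\<in>K-{k}. a i * b i) - inverse (c k) * b k * (\<Sum>i\<in>K-{k}. a i * c i)" .
  have "inverse (c k) * (a k * c k + X) * b k = a k * b k + inverse (c k) * b k * X" for X
    using assms(3) by (simp add: field_simps)
  then show ?thesis unfolding s1 s2 s3 by simp
qed

text \<open>Gaussian elimination on the right factors: pivoting on a nonzero value b k r0 rewrites the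
  sum as a shorter sum whose left slices still lie in S, plus a pure tensor whose left factor is
  itself a rescaled left slice.\<close>

lemma tensor_sum_left_slices:
  fixes S :: "('b \<Rightarrow> 'k::field) set" and W :: "('c \<Rightarrow> 'k) set"
  assumes S: "subspace S" and W: "subspace W"
    and "finite K" "\<forall>i\<in>K. b i \<in> W" "\<forall>r. (\<lambda>u. \<Sum>i\<in>K. a i u * b i r) \<in> S"
  shows "(\<lambda>(u, w). \<Sum>i\<in>K. a i u * b i w) \<in> tensor S W"
  using assms(3-5)
proof (induction K arbitrary: b rule: finite_psubset_induct)
  case (psubset K)
  show ?case
  proof (cases "\<exists>k\<in>K. \<exists>r. b k r \<noteq> 0")
    case False
    then have "(\<lambda>(u, w). \<Sum>i\<in>K. a i u * b i w) = (\<lambda>uw. 0)" by (auto simp: fun_eq_iff)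
    then show ?thesis using subspace_zero[OF subspace_tensor] by simp
  next
    case True
    then obtain k r0 where k: "k \<in> K" "b k r0 \<noteq> 0" by blast
    define s' where "s' = (\<lambda>u. inverse (b k r0) * (\<Sum>i\<in>K. a i u * b i r0))"
    define b' where "b' i = (\<lambda>w. b i w + (- (b i r0 / b k r0)) * b k w)" for i
    have s'S: "s' \<in> S"
      unfolding s'_def using subspace_scale[OF S psubset.prems(2)[rule_format, of r0]] .
    have b'W: "\<forall>i\<in>K-{k}. b' i \<in> W"
    proof
      fix i assume "i \<in> K - {k}"
      then have "b i \<in> W" "b k \<in> W" using psubset.prems(1) k(1) by auto
      then show "b' i \<in> W" unfolding b'_def by (intro subspace_add[OF W] subspace_scale[OF W])
    qed
    have pivot: "(\<Sum>i\<in>K. a i u * b i w) = (\<Sum>i\<in>K-{k}. a i u * b' i w) + s' u * b k w" for u w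
      using sum_pivot[where a="\<lambda>i. a i u" and b="\<lambda>i. b i w" and c="\<lambda>i. b i r0", OF psubset.hyps(1) k]
      by (simp add: b'_def s'_def)
    have "(\<lambda>(u, w). \<Sum>i\<in>K-{k}. a i u * b' i w) \<in> tensor S W"
    proof (rule psubset.IH)
      show "K - {k} \<subset> K" using k(1) by blast
      show "\<forall>i\<in>K-{k}. b' i \<in> W" by (rule b'W)
      show "\<forall>r. (\<lambda>u. \<Sum>i\<in>K-{k}. a i u * b' i r) \<in> S"
      proof
        fix r
        have "(\<lambda>u. \<Sum>i\<in>K-{k}. a i u * b' i r) = (\<lambda>u. (\<Sum>i\<in>K. a i u * b i r) + (- b k r) * s' u)"
          using pivot[of _ r] by (auto simp: fun_eq_iff algebra_simps)
        moreover have "(\<lambda>u. (\<Sum>i\<in>K. a i u * b i r) + (- b k r) * s' u) \<in> S"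
          by (rule subspace_add[OF S psubset.prems(2)[rule_format, of r] subspace_scale[OF S s'S]])
        ultimately show "(\<lambda>u. \<Sum>i\<in>K-{k}. a i u * b' i r) \<in> S" by simp
      qed
    qed
    moreover have "(\<lambda>(u, w). s' u * b k w) \<in> tensor S W"
      by (rule tensor_pure[OF s'S]) (use psubset.prems(1) k(1) in blast)
    ultimately have "(\<lambda>uw. (\<lambda>(u, w). \<Sum>i\<in>K-{k}. a i u * b' i w) uw + (\<lambda>(u, w). s' u * b k w) uw)
        \<in> tensor S W"
      by (rule subspace_add[OF subspace_tensor])
    moreover have "(\<lambda>uw. (\<lambda>(u, w). \<Sum>i\<in>K-{k}. a i u * b' i w) uw + (\<lambda>(u, w). s' u * b k w) uw)
       = (\<lambda>(u, w). \<Sum>i\<in>K. a i u * b i w)"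
      using pivot by (auto simp: fun_eq_iff)
    ultimately show ?thesis by simp
  qed
qed

lemma tensor_restrict_left:
  fixes U S :: "('b \<Rightarrow> 'k::field) set" and W :: "('c \<Rightarrow> 'k) set"
  assumes "subspace U" "subspace W" "subspace S" "z \<in> tensor U W" "\<forall>r. (\<lambda>u. z (u, r)) \<in> S"
  shows "z \<in> tensor S W"
proof -
  obtain K :: "('b \<times> 'c \<Rightarrow> 'k) set" and a b
    where K: "finite K" "\<forall>i\<in>K. a i \<in> U \<and> b i \<in> W" "z = (\<lambda>(u, w). \<Sum>i\<in>K. a i u * b i w)"
    by (rule tensor_obtain_sum[OF assms(1,4)])
  show ?thesis
    unfolding K(3) by (rule tensor_sum_left_slices[OF assms(3,2) K(1)]) (use K assms(5) in auto)
qed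

lemma tensor_restrict:
  fixes U S1 :: "('b \<Rightarrow> 'k::field) set" and W S2 :: "('c \<Rightarrow> 'k) set"
  assumes U: "subspace U" and W: "subspace W" and S1: "subspace S1" and S2: "subspace S2"
    and z: "z \<in> tensor U W"
    and left: "\<forall>r. (\<lambda>u. z (u, r)) \<in> S1" and right: "\<forall>r. (\<lambda>w. z (r, w)) \<in> S2"
  shows "z \<in> tensor S1 S2"
proof -
  have "(\<lambda>(w, u). z (u, w)) \<in> tensor W S1"
    by (rule tensor_swap[OF S1 tensor_restrict_left[OF U W S1 z left]])
  then have "(\<lambda>(w, u). z (u, w)) \<in> tensor S2 S1"
    by (rule tensor_restrict_left[OF W S1 S2]) (use right in simp)
  then have "(\<lambda>(u, w). (\<lambda>(w, u). z (u, w)) (w, u)) \<in> tensor S1 S2"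
    by (rule tensor_swap[OF S2])
  then show ?thesis by simp
qed

section \<open>Right quotients and the right coideals they generate\<close>

text \<open>rquot t x r is the right quotient of x by the path r: the coefficient of u in it is that
  of u r in x. For a multipath x, rquot_hull t {x} is the right coideal generated by x.\<close>

definition rquot :: "('a \<Rightarrow> 'v) \<Rightarrow> ('v \<times> 'a list \<Rightarrow> 'k::field) \<Rightarrow> 'v \<times> 'a list
    \<Rightarrow> 'v \<times> 'a list \<Rightarrow> 'k" where
  "rquot t x r = (\<lambda>u. comult t x (u, r))"

definition rquot_hull :: "('a \<Rightarrow> 'v) \<Rightarrow> ('v \<times> 'a list \<Rightarrow> 'k::field) set
    \<Rightarrow> ('v \<times> 'a list \<Rightarrow> 'k) set" where
  "rquot_hull t X = lspan {rquot t x r | x r. x \<in> X}"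

lemma subcoalgebra_subspace: "subcoalgebra t K D \<Longrightarrow> subspace D"
  by (simp add: subcoalgebra_def)

lemma subcoalgebra_rquot:
  assumes "subcoalgebra t K D" "x \<in> D"
  shows "rquot t x r \<in> D"
proof -
  have "subspace D" "comult t x \<in> tensor D D" using assms unfolding subcoalgebra_def by auto
  then show ?thesis unfolding rquot_def by (rule tensor_slice_left)
qed

lemma subcoalgebra_right_slice:
  assumes "subcoalgebra t K D" "x \<in> D"
  shows "(\<lambda>w. comult t x (r, w)) \<in> D"
proof -
  have "subspace D" "comult t x \<in> tensor D D" using assms unfolding subcoalgebra_def by auto
  then show ?thesis using tensor_slice_right[of D D "comult t x" r] by simp
qed

lemma right_coideal_rquot:
  assumes "right_coideal t D J" "y \<in> J"
  shows "rquot t y r \<in> J"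
proof -
  have "subspace J" "comult t y \<in> tensor J D" using assms unfolding right_coideal_def by auto
  then show ?thesis unfolding rquot_def by (rule tensor_slice_left)
qed

lemma subcoalgebra_Inter:
  assumes ne: "\<SS> \<noteq> {}" and all: "\<forall>S\<in>\<SS>. subcoalgebra t K S"
  shows "subcoalgebra t K (\<Inter>\<SS>)"
proof -
  have sS: "subspace S" if "S \<in> \<SS>" for S using all that subcoalgebra_subspace by blast
  have sub: "subspace (\<Inter>\<SS>)"
    unfolding subspace_def
  proof (intro conjI ballI allI InterI)
    fix S assume "S \<in> \<SS>" then show "(\<lambda>u. 0) \<in> S" using sS subspace_zero by blast
  next
    fix x y S assume "x \<in> \<Inter>\<SS>" "y \<in> \<Inter>\<SS>" "S \<in> \<SS>"
    then show "(\<lambda>u. x u + y u) \<in> S" using sS[of S] subspace_add[of S x y] by blast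
  next
    fix c x S assume "x \<in> \<Inter>\<SS>" "S \<in> \<SS>"
    then show "(\<lambda>u. c * x u) \<in> S" using sS[of S] subspace_scale[of S x c] by blast
  qed
  obtain S0 where S0: "S0 \<in> \<SS>" using ne by blast
  have "comult t x \<in> tensor (\<Inter>\<SS>) (\<Inter>\<SS>)" if x: "x \<in> \<Inter>\<SS>" for x
  proof (rule tensor_restrict[where U=S0 and W=S0])
    show "subspace S0" using sS S0 by blast
    then show "subspace S0" .
    show "subspace (\<Inter>\<SS>)" by (rule sub)
    then show "subspace (\<Inter>\<SS>)" .
    show "comult t x \<in> tensor S0 S0" using all S0 x unfolding subcoalgebra_def by blast
    show "\<forall>r. (\<lambda>u. comult t x (u, r)) \<in> \<Inter>\<SS>"
      using subcoalgebra_rquot all x unfolding rquot_def by blast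
    show "\<forall>r. (\<lambda>w. comult t x (r, w)) \<in> \<Inter>\<SS>"
      using subcoalgebra_right_slice all x by blast
  qed
  moreover have "\<Inter>\<SS> \<subseteq> K" using all S0 unfolding subcoalgebra_def by blast
  ultimately show ?thesis using sub unfolding subcoalgebra_def by blast
qed

lemma ptgt_pcat: "ptgt t u = psrc r \<Longrightarrow> ptgt t (pcat u r) = ptgt t r"
  by (auto simp: ptgt_def pcat_def psrc_def)

lemma rquot_rquot:
  "rquot t (rquot t x r1) r2 = (if ptgt t r2 = psrc r1 then rquot t x (pcat r2 r1) else (\<lambda>u. 0))"
proof (cases "ptgt t r2 = psrc r1")
  case True
  have "rquot t (rquot t x r1) r2 u = rquot t x (pcat r2 r1) u" for u
  proof (cases "ptgt t u = psrc r2")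
    case True
    then show ?thesis using \<open>ptgt t r2 = psrc r1\<close> ptgt_pcat[OF True]
      by (simp add: rquot_def comult_def pcat_def psrc_def)
  next
    case False
    then show ?thesis by (simp add: rquot_def comult_def pcat_def psrc_def)
  qed
  then show ?thesis using True by auto
next
  case False
  have "rquot t (rquot t x r1) r2 u = 0" for u
    using ptgt_pcat[of t u r2] False by (auto simp add: rquot_def comult_def)
  then show ?thesis using False by auto
qed

lemma rquot_lincomb: "rquot t (\<lambda>u. \<Sum>b\<in>B. c b * b u) r = (\<lambda>u. \<Sum>b\<in>B. c b * rquot t b r u)"
  by (auto simp: rquot_def comult_def fun_eq_iff)

lemma subspace_rquot_hull: "subspace (rquot_hull t X)"
  unfolding rquot_hull_def by (rule subspace_lspan)

lemma rquot_in_rquot_hull: "x \<in> X \<Longrightarrow> rquot t x r \<in> rquot_hull t X"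
  unfolding rquot_hull_def by (rule lspan_superset) blast

lemma rquot_hull_closed:
  assumes "y \<in> rquot_hull t X"
  shows "rquot t y r \<in> rquot_hull t X"
proof -
  obtain B c where B: "finite B" "B \<subseteq> {rquot t x r | x r. x \<in> X}" "y = (\<lambda>u. \<Sum>b\<in>B. c b * b u)"
    using assms unfolding rquot_hull_def by (rule lspanE)
  have "rquot t b r \<in> rquot_hull t X" if "b \<in> B" for b
  proof -
    obtain x r1 where "x \<in> X" "b = rquot t x r1" using B(2) \<open>b \<in> B\<close> by blast
    then show ?thesis
      by (simp add: rquot_rquot rquot_in_rquot_hull subspace_zero[OF subspace_rquot_hull])
  qed
  then have "(\<lambda>u. \<Sum>b\<in>B. c b * rquot t b r u) \<in> rquot_hull t X"
    by (intro subspace_lincomb[OF subspace_rquot_hull B(1)]) blast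
  then show ?thesis unfolding B(3) rquot_lincomb .
qed

lemma rquot_hull_least:
  assumes "subspace J" "\<forall>x\<in>X. \<forall>r. rquot t x r \<in> J"
  shows "rquot_hull t X \<subseteq> J"
  unfolding rquot_hull_def by (rule lspan_least[OF assms(1)]) (use assms(2) in blast)

lemma rquot_hull_subset_rquot_hull: "Y \<subseteq> rquot_hull t X \<Longrightarrow> rquot_hull t Y \<subseteq> rquot_hull t X"
  by (rule rquot_hull_least[OF subspace_rquot_hull]) (use rquot_hull_closed in blast)

lemma rquot_hull_subset_right_coideal:
  "right_coideal t D J \<Longrightarrow> X \<subseteq> J \<Longrightarrow> rquot_hull t X \<subseteq> J"
  by (rule rquot_hull_least) (auto simp: right_coideal_def intro: right_coideal_rquot)

lemma rquot_hull_subset_subcoalgebra: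
  "subcoalgebra t K D \<Longrightarrow> X \<subseteq> D \<Longrightarrow> rquot_hull t X \<subseteq> D"
  by (rule rquot_hull_least) (auto intro: subcoalgebra_subspace subcoalgebra_rquot)

text \<open>A multipath ending at w is its own right quotient by the trivial path at w.\<close>

lemma multipath_in_rquot_hull:
  assumes "multipath t x" "x \<in> X"
  shows "x \<in> rquot_hull t X"
proof -
  obtain v w where vw: "\<forall>p. x p \<noteq> 0 \<longrightarrow> psrc p = v \<and> ptgt t p = w"
    using assms(1) unfolding multipath_def by blast
  have "rquot t x (w, []) = x"
  proof
    fix u
    show "rquot t x (w, []) u = x u"
      using vw[rule_format, of u] by (cases u) (auto simp: rquot_def comult_def psrc_def pcat_def)
  qed
  then show ?thesis using rquot_in_rquot_hull[OF assms(2)] by metis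
qed

lemma right_coideal_rquot_hull:
  assumes D: "subcoalgebra t K D" and X: "X \<subseteq> D"
  shows "right_coideal t D (rquot_hull t X)"
proof -
  have sD: "subspace D" using D by (rule subcoalgebra_subspace)
  have HD: "rquot_hull t X \<subseteq> D" by (rule rquot_hull_subset_subcoalgebra[OF D X])
  have "comult t y \<in> tensor (rquot_hull t X) D" if y: "y \<in> rquot_hull t X" for y
  proof (rule tensor_restrict[OF sD sD subspace_rquot_hull sD])
    show "comult t y \<in> tensor D D" using D y HD unfolding subcoalgebra_def by blast
    show "\<forall>r. (\<lambda>u. comult t y (u, r)) \<in> rquot_hull t X"
      using rquot_hull_closed[OF y] unfolding rquot_def by blast
    show "\<forall>r. (\<lambda>w. comult t y (r, w)) \<in> D" using subcoalgebra_right_slice[OF D] y HD by blast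
  qed
  then show ?thesis unfolding right_coideal_def using subspace_rquot_hull HD by blast
qed

lemma coideal_gen_subset_rquot_hull:
  assumes "subcoalgebra t K D" "multipath t x" "x \<in> D"
  shows "coideal_gen t D x \<subseteq> rquot_hull t {x}"
  unfolding coideal_gen_def
  using right_coideal_rquot_hull[OF assms(1)] multipath_in_rquot_hull[OF assms(2)] assms(3) by blast

lemma coideal_gen_self: "x \<in> coideal_gen t D x"
  unfolding coideal_gen_def by blast

section \<open>Independent families of multipaths\<close>

definition endpoint_part :: "('a \<Rightarrow> 'v) \<Rightarrow> ('v \<times> 'a list \<Rightarrow> 'k::field) \<Rightarrow> 'v \<Rightarrow> 'v
    \<Rightarrow> 'v \<times> 'a list \<Rightarrow> 'k" where
  "endpoint_part t x v w = (\<lambda>u. if psrc u = v \<and> ptgt t u = w then x u else 0)"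

lemma endpoint_part_eq: "endpoint_part t x v w = (\<lambda>u. comult t (rquot t x (w, [])) ((v, []), u))"
proof
  fix u
  show "endpoint_part t x v w u = comult t (rquot t x (w, [])) ((v, []), u)"
    by (cases u) (auto simp: endpoint_part_def rquot_def comult_def psrc_def ptgt_def pcat_def)
qed

lemma subcoalgebra_endpoint_part: "subcoalgebra t K D \<Longrightarrow> x \<in> D \<Longrightarrow> endpoint_part t x v w \<in> D"
  unfolding endpoint_part_eq by (rule subcoalgebra_right_slice) (auto intro: subcoalgebra_rquot)

lemma multipath_endpoint_part:
  assumes "fin_supp x" "x p \<noteq> 0"
  shows "multipath t (endpoint_part t x (psrc p) (ptgt t p))"
proof -
  have "{u. endpoint_part t x (psrc p) (ptgt t p) u \<noteq> 0} \<subseteq> {u. x u \<noteq> 0}"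
    by (auto simp: endpoint_part_def)
  then have "fin_supp (endpoint_part t x (psrc p) (ptgt t p))"
    using assms(1) unfolding fin_supp_def by (rule finite_subset)
  moreover have "endpoint_part t x (psrc p) (ptgt t p) p \<noteq> 0"
    using assms(2) by (simp add: endpoint_part_def)
  moreover have "endpoint_part t x (psrc p) (ptgt t p) \<noteq> (\<lambda>u. 0)"
    using calculation(2) by metis
  moreover have "\<forall>u. endpoint_part t x (psrc p) (ptgt t p) u \<noteq> 0 \<longrightarrow> psrc u = psrc p \<and> ptgt t u = ptgt t p"
    by (simp add: endpoint_part_def)
  ultimately show ?thesis unfolding multipath_def by blast
qed

lemma in_lspan_endpoint_parts:
  assumes "fin_supp x"
  shows "x \<in> lspan ((\<lambda>p. endpoint_part t x (psrc p) (ptgt t p)) ` {p. x p \<noteq> 0})"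
    (is "_ \<in> lspan ?G")
proof (rule lspanI[where c = "\<lambda>_. 1"])
  show "finite ?G" using assms unfolding fin_supp_def by blast
  show "x = (\<lambda>u. \<Sum>g\<in>?G. 1 * g u)"
  proof
    fix u
    show "x u = (\<Sum>g\<in>?G. 1 * g u)"
    proof (cases "x u = 0")
      case True
      then have "g u = 0" if "g \<in> ?G" for g using that by (auto simp: endpoint_part_def)
      then show ?thesis using True by (simp add: sum.neutral)
    next
      case False
      define g0 where "g0 = endpoint_part t x (psrc u) (ptgt t u)"
      have g0: "g0 \<in> ?G" using False unfolding g0_def by blast
      have "g u = 0" if "g \<in> ?G - {g0}" for g
        using that unfolding g0_def endpoint_part_def by auto
      then have "(\<Sum>g\<in>?G - {g0}. g u) = 0" by (intro sum.neutral) blast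
      then have "(\<Sum>g\<in>?G. 1 * g u) = g0 u"
        using \<open>finite ?G\<close> g0 by (simp add: sum.remove)
      then show ?thesis by (simp add: g0_def endpoint_part_def)
    qed
  qed
qed simp

lemma exists_multipath_spanning_set:
  assumes D: "subcoalgebra t K D" and Kf: "\<forall>x\<in>K. fin_supp x" and B: "finite B" "B \<subseteq> D"
  shows "\<exists>G. finite G \<and> G \<subseteq> MP t D \<and> B \<subseteq> lspan G"
proof -
  have fs: "fin_supp x" if "x \<in> B" for x using that B(2) D Kf unfolding subcoalgebra_def by blast
  define G where "G = (\<Union>x\<in>B. (\<lambda>p. endpoint_part t x (psrc p) (ptgt t p)) ` {p. x p \<noteq> 0})"
  have "finite G" unfolding G_def using B(1) fs unfolding fin_supp_def by blast
  moreover have "G \<subseteq> MP t D"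
  proof
    fix g assume "g \<in> G"
    then obtain x p where x: "x \<in> B" "x p \<noteq> 0" "g = endpoint_part t x (psrc p) (ptgt t p)"
      unfolding G_def by blast
    then show "g \<in> MP t D"
      unfolding MP_def using subcoalgebra_endpoint_part[OF D] multipath_endpoint_part[OF fs] B(2)
      by auto
  qed
  moreover have "B \<subseteq> lspan G"
  proof
    fix x assume "x \<in> B"
    then have "x \<in> lspan ((\<lambda>p. endpoint_part t x (psrc p) (ptgt t p)) ` {p. x p \<noteq> 0})"
      using fs in_lspan_endpoint_parts by blast
    moreover have "(\<lambda>p. endpoint_part t x (psrc p) (ptgt t p)) ` {p. x p \<noteq> 0} \<subseteq> G"
      using \<open>x \<in> B\<close> unfolding G_def by blast
    ultimately show "x \<in> lspan G" using lspan_mono by blast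
  qed
  ultimately show ?thesis by blast
qed

lemma exists_irredundant_subset:
  assumes "finite G" "\<forall>g\<in>G. multipath t g"
  shows "\<exists>F\<subseteq>G. G \<subseteq> rquot_hull t F \<and> (\<forall>f\<in>F. f \<notin> rquot_hull t (F - {f}))"
  using assms
proof (induction G rule: finite_psubset_induct)
  case (psubset G)
  show ?case
  proof (cases "\<exists>g\<in>G. g \<in> rquot_hull t (G - {g})")
    case False
    have "G \<subseteq> rquot_hull t G" using psubset.prems multipath_in_rquot_hull by blast
    with False show ?thesis by (intro exI[of _ G]) blast
  next
    case True
    then obtain g where g: "g \<in> G" "g \<in> rquot_hull t (G - {g})" by blast
    have "G - {g} \<subset> G" using g(1) by blast
    moreover have "\<forall>h\<in>G - {g}. multipath t h" using psubset.prems by blast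
    ultimately have "\<exists>F\<subseteq>G - {g}. G - {g} \<subseteq> rquot_hull t F \<and> (\<forall>f\<in>F. f \<notin> rquot_hull t (F - {f}))"
      by (rule psubset.IH)
    then obtain F where F: "F \<subseteq> G - {g}" "G - {g} \<subseteq> rquot_hull t F"
        "\<forall>f\<in>F. f \<notin> rquot_hull t (F - {f})"
      by auto
    have "g \<in> rquot_hull t F" using g(2) rquot_hull_subset_rquot_hull[OF F(2)] by blast
    with F have "F \<subseteq> G \<and> G \<subseteq> rquot_hull t F" by blast
    with F(3) show ?thesis by blast
  qed
qed

lemma lin_indep_if_irredundant:
  assumes mp: "\<forall>f\<in>F. multipath t f" and irr: "\<forall>f\<in>F. f \<notin> rquot_hull t (F - {f})"
  shows "lin_indep F"
  unfolding lin_indep_def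
proof (intro allI impI ballI)
  fix B c b0
  assume B: "finite B \<and> B \<subseteq> F \<and> (\<forall>u. (\<Sum>b\<in>B. c b * b u) = 0)" and b0: "b0 \<in> B"
  show "c b0 = 0"
  proof (rule ccontr)
    assume cb0: "c b0 \<noteq> 0"
    have "b0 u = (\<Sum>b\<in>B - {b0}. (- c b / c b0) * b u)" for u
    proof -
      have "(\<Sum>b\<in>B. c b * b u) = c b0 * b0 u + (\<Sum>b\<in>B - {b0}. c b * b u)"
        using B b0 by (simp add: sum.remove)
      moreover have "(\<Sum>b\<in>B. c b * b u) = 0" using B by blast
      ultimately have "0 = c b0 * b0 u + (\<Sum>b\<in>B - {b0}. c b * b u)" by simp
      then have "c b0 * b0 u = - (\<Sum>b\<in>B - {b0}. c b * b u)" by (simp add: eq_neg_iff_add_eq_0)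
      then have "b0 u = - (\<Sum>b\<in>B - {b0}. c b * b u) / c b0" using cb0 by (simp add: field_simps)
      also have "\<dots> = (\<Sum>b\<in>B - {b0}. (- c b / c b0) * b u)"
        by (simp add: sum_divide_distrib sum_negf)
      finally show ?thesis .
    qed
    then have "b0 = (\<lambda>u. \<Sum>b\<in>B - {b0}. (- c b / c b0) * b u)" by blast
    moreover have "B - {b0} \<subseteq> rquot_hull t (F - {b0})"
      using B mp multipath_in_rquot_hull[of t _ "F - {b0}"] by blast
    moreover have "(\<lambda>u. \<Sum>b\<in>B - {b0}. (- c b / c b0) * b u) \<in> rquot_hull t (F - {b0})"
      by (rule subspace_lincomb[OF subspace_rquot_hull]) (use B calculation(2) in auto)
    ultimately show False using irr B b0 by auto
  qed
qed

lemma independent_if_irredundant: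
  assumes D: "subcoalgebra t K D" and F: "F \<subseteq> MP t D"
    and irr: "\<forall>f\<in>F. f \<notin> rquot_hull t (F - {f})"
  shows "independent t D F"
proof -
  have mp: "\<forall>f\<in>F. multipath t f" using F unfolding MP_def by blast
  have "coideal_gen t D x \<inter> F \<subseteq> {x}" if x: "x \<in> F" for x
  proof
    fix y assume y: "y \<in> coideal_gen t D x \<inter> F"
    show "y \<in> {x}"
    proof (rule ccontr)
      assume "y \<notin> {x}"
      then have "{x} \<subseteq> rquot_hull t (F - {y})"
        using multipath_in_rquot_hull[of t x "F - {y}"] mp x by blast
      then have "rquot_hull t {x} \<subseteq> rquot_hull t (F - {y})"
        by (rule rquot_hull_subset_rquot_hull)
      moreover have "y \<in> rquot_hull t {x}"
        using coideal_gen_subset_rquot_hull[OF D] mp x y F unfolding MP_def by blast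
      ultimately show False using irr y by blast
    qed
  qed
  moreover have "x \<in> coideal_gen t D x" for x by (rule coideal_gen_self)
  ultimately have "\<forall>x\<in>F. coideal_gen t D x \<inter> F = {x}" by blast
  then show ?thesis unfolding independent_def using F lin_indep_if_irredundant[OF mp irr] by blast
qed

lemma exists_independent_spanning:
  assumes D: "subcoalgebra t K D" and Kf: "\<forall>x\<in>K. fin_supp x" and B: "finite B" "B \<subseteq> D"
  shows "\<exists>F. finite F \<and> independent t D F \<and> B \<subseteq> rquot_hull t F"
proof -
  obtain G where G: "finite G" "G \<subseteq> MP t D" "B \<subseteq> lspan G"
    using exists_multipath_spanning_set[OF assms] by blast
  have "\<forall>g\<in>G. multipath t g" using G(2) unfolding MP_def by blast
  then have "\<exists>F\<subseteq>G. G \<subseteq> rquot_hull t F \<and> (\<forall>f\<in>F. f \<notin> rquot_hull t (F - {f}))"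
    by (rule exists_irredundant_subset[OF G(1)])
  then obtain F where F: "F \<subseteq> G" "G \<subseteq> rquot_hull t F" "\<forall>f\<in>F. f \<notin> rquot_hull t (F - {f})"
    by auto
  have "independent t D F" using independent_if_irredundant[OF D _ F(3)] F(1) G(2) by blast
  moreover have "B \<subseteq> rquot_hull t F" using G(3) lspan_least[OF subspace_rquot_hull F(2)] by blast
  moreover have "finite F" using F(1) G(1) by (rule finite_subset)
  ultimately show ?thesis by blast
qed

section \<open>Path coalgebras\<close>

lemma chain_from_append:
  "chain_from s t v (xs @ ys) = (chain_from s t v xs \<and> chain_from s t (if xs = [] then v else t (last xs)) ys)"
  by (induction xs arbitrary: v) auto

lemma is_path_ptgt:
  assumes "\<forall>a\<in>A. t a \<in> V" "is_path V A s t p"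
  shows "ptgt t p \<in> V"
proof (cases "snd p = []")
  case False
  then have "last (snd p) \<in> A" using assms(2) last_in_set unfolding is_path_def by blast
  then show ?thesis using assms(1) False by (simp add: ptgt_def)
qed (use assms in \<open>auto simp: is_path_def ptgt_def\<close>)

lemma is_path_pcatD:
  assumes "\<forall>a\<in>A. t a \<in> V" "is_path V A s t (pcat u w)" "ptgt t u = psrc w"
  shows "is_path V A s t u" "is_path V A s t w"
proof -
  have c: "chain_from s t (fst u) (snd u @ snd w)" "fst u \<in> V" "set (snd u) \<subseteq> A" "set (snd w) \<subseteq> A"
    using assms(2) by (auto simp: is_path_def pcat_def)
  then show u: "is_path V A s t u" unfolding is_path_def chain_from_append by simp
  have "fst w = ptgt t u" using assms(3) by (simp add: psrc_def)
  moreover have "ptgt t u \<in> V" using is_path_ptgt[OF assms(1) u] .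
  ultimately show "is_path V A s t w"
    using c unfolding is_path_def chain_from_append ptgt_def by (auto split: if_splits)
qed

lemma pathvec_mono: "V \<subseteq> V' \<Longrightarrow> A \<subseteq> A' \<Longrightarrow> pathvec V A s t \<subseteq> pathvec V' A' s t"
  unfolding pathvec_def is_path_def by blast

lemma subspace_pathvec: "subspace (pathvec V A s t :: ('v \<times> 'a list \<Rightarrow> 'k::field) set)"
  (is "subspace ?P")
  unfolding subspace_def
proof (intro conjI ballI allI)
  show "(\<lambda>u. 0) \<in> ?P" by (simp add: pathvec_def fin_supp_def)
next
  fix x y assume x: "x \<in> ?P" and y: "y \<in> ?P"
  have "{u. x u + y u \<noteq> 0} \<subseteq> {u. x u \<noteq> 0} \<union> {u. y u \<noteq> 0}" by auto
  then have "fin_supp (\<lambda>u. x u + y u)"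
    using x y unfolding pathvec_def fin_supp_def by (auto intro: finite_subset)
  moreover have "x p + y p \<noteq> 0 \<longrightarrow> is_path V A s t p" for p
    using x y unfolding pathvec_def by (metis (mono_tags, lifting) add.right_neutral add_0 mem_Collect_eq)
  ultimately show "(\<lambda>u. x u + y u) \<in> ?P" unfolding pathvec_def by simp
next
  fix c x assume x: "x \<in> ?P"
  have "{u. c * x u \<noteq> 0} \<subseteq> {u. x u \<noteq> 0}" by auto
  then have "fin_supp (\<lambda>u. c * x u)"
    using x unfolding pathvec_def fin_supp_def by (auto intro: finite_subset)
  moreover have "c * x p \<noteq> 0 \<longrightarrow> is_path V A s t p" for p
    using x unfolding pathvec_def by (metis (mono_tags, lifting) mem_Collect_eq mult_zero_right)
  ultimately show "(\<lambda>u. c * x u) \<in> ?P" unfolding pathvec_def by simp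
qed

definition kdelta :: "'p \<Rightarrow> 'p \<Rightarrow> 'k::field" where
  "kdelta q = (\<lambda>u. if u = q then 1 else 0)"

lemma kdelta_in_pathvec: "is_path V A s t q \<Longrightarrow> kdelta q \<in> pathvec V A s t"
  unfolding pathvec_def fin_supp_def kdelta_def by (auto intro: finite_subset[of _ "{q}"])

lemma finite_factorizations:
  assumes "fin_supp x"
  shows "finite {(u, w). ptgt t u = psrc w \<and> x (pcat u w) \<noteq> 0}"
proof -
  define K where "K = {(u, w). ptgt t u = psrc w \<and> x (pcat u w) \<noteq> 0}"
  have "inj_on (\<lambda>(u, w). (pcat u w, length (snd u))) K"
  proof (rule inj_onI, clarify)
    fix u w u' w'
    assume a: "(u, w) \<in> K" "(u', w') \<in> K" "pcat u w = pcat u' w'" "length (snd u) = length (snd u')"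
    then have u: "fst u = fst u'" "snd u = snd u'" and "snd w = snd w'" by (auto simp: pcat_def)
    moreover have "fst w = ptgt t u" "fst w' = ptgt t u'" using a(1,2) by (auto simp: K_def psrc_def)
    moreover have "ptgt t u = ptgt t u'" using u by (simp add: ptgt_def)
    ultimately show "u = u' \<and> w = w'" by (simp add: prod_eq_iff)
  qed
  moreover have "(\<lambda>(u, w). (pcat u w, length (snd u))) ` K \<subseteq> Sigma {p. x p \<noteq> 0} (\<lambda>p. {..length (snd p)})"
    by (auto simp: K_def pcat_def)
  moreover have "finite (Sigma {p. x p \<noteq> 0} (\<lambda>p. {..length (snd p)}))"
    using assms unfolding fin_supp_def by auto
  ultimately show ?thesis unfolding K_def[symmetric] using finite_subset finite_imageD by blast
qed

lemma comult_as_sum: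
  fixes x :: "'v \<times> 'a list \<Rightarrow> 'k::field" and t :: "'a \<Rightarrow> 'v"
  assumes "fin_supp x"
  defines "K \<equiv> {(u, w). ptgt t u = psrc w \<and> x (pcat u w) \<noteq> 0}"
  shows "comult t x = (\<lambda>(u, w). \<Sum>i\<in>K. (x (pcat (fst i) (snd i)) * kdelta (fst i) u) * kdelta (snd i) w)"
proof
  fix uw :: "('v \<times> 'a list) \<times> ('v \<times> 'a list)"
  obtain u w where uw: "uw = (u, w)" by (rule prod.exhaust)
  have "(\<Sum>i\<in>K. (x (pcat (fst i) (snd i)) * kdelta (fst i) u) * kdelta (snd i) w)
      = (\<Sum>i\<in>K. if i = (u, w) then x (pcat u w) else 0)"
    by (rule sum.cong) (auto simp: kdelta_def)
  also have "\<dots> = comult t x (u, w)"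
    using finite_factorizations[OF assms(1)] by (simp add: sum.delta' K_def comult_def)
  finally show "comult t x uw = (\<lambda>(u, w). \<Sum>i\<in>K. (x (pcat (fst i) (snd i)) * kdelta (fst i) u) * kdelta (snd i) w) uw"
    unfolding uw by simp
qed

lemma subcoalgebra_pathvec:
  assumes Q: "\<forall>a\<in>A. t a \<in> V"
  shows "subcoalgebra t (pathvec V A s t :: ('v \<times> 'a list \<Rightarrow> 'k::field) set) (pathvec V A s t)"
proof -
  let ?P = "pathvec V A s t :: ('v \<times> 'a list \<Rightarrow> 'k) set"
  have "comult t x \<in> tensor ?P ?P" if x: "x \<in> ?P" for x
  proof -
    define K where "K = {(u, w). ptgt t u = psrc w \<and> x (pcat u w) \<noteq> 0}"
    have fs: "fin_supp x" using x unfolding pathvec_def by blast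
    have "(\<lambda>u'. x (pcat (fst i) (snd i)) * kdelta (fst i) u') \<in> ?P \<and> kdelta (snd i) \<in> ?P" if "i \<in> K" for i
    proof -
      have "x (pcat (fst i) (snd i)) \<noteq> 0" "ptgt t (fst i) = psrc (snd i)"
        using that unfolding K_def by auto
      then have "is_path V A s t (pcat (fst i) (snd i))" "ptgt t (fst i) = psrc (snd i)"
        using x unfolding pathvec_def by blast+
      then show ?thesis
        using is_path_pcatD[OF Q] kdelta_in_pathvec subspace_scale[OF subspace_pathvec] by metis
    qed
    then show ?thesis unfolding comult_as_sum[OF fs] K_def[symmetric]
      by (intro tensor_sum) (use finite_factorizations[OF fs] K_def in auto)
  qed
  then show ?thesis unfolding subcoalgebra_def using subspace_pathvec by blast
qed

section \<open>The tail closure\<close>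

definition quiver_subcoalgebra :: "'v set \<Rightarrow> 'a set \<Rightarrow> ('a \<Rightarrow> 'v) \<Rightarrow> ('a \<Rightarrow> 'v)
    \<Rightarrow> ('v \<times> 'a list \<Rightarrow> 'k::field) set \<Rightarrow> bool" where
  "quiver_subcoalgebra V A s t D \<longleftrightarrow> (\<forall>a\<in>A. t a \<in> V) \<and> subcoalgebra t (pathvec V A s t) D"

lemma liftQ_OV:
  fixes x :: "'v \<times> 'a list \<Rightarrow> 'k::zero"
  shows "liftQ x (OV v, map OA bs) = x (v, bs)"
proof -
  have inj: "inj (OA :: 'a \<Rightarrow> ('v,'a,'k) arr)" by (auto intro: injI)
  have "(SOME vb. ((OV v, map OA bs) :: ('v,'a,'k) bpath) = (OV (fst vb), map OA (snd vb))) = (v, bs)"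
  proof (rule some_equality)
    fix vb assume "((OV v, map OA bs) :: ('v,'a,'k) bpath) = (OV (fst vb), map OA (snd vb))"
    then have "v = fst vb" "bs = snd vb" using inj_map_eq_map[OF inj] by auto
    then show "vb = (v, bs)" by simp
  qed simp
  moreover have "liftQ x (OV v, map OA bs) = x (SOME vb. ((OV v, map OA bs) :: ('v,'a,'k) bpath) = (OV (fst vb), map OA (snd vb)))"
    unfolding liftQ_def by (subst if_P) blast+
  ultimately show ?thesis by simp
qed

lemma liftQ_not_lifted: "\<not> (\<exists>v bs. p = (OV v, map OA bs)) \<Longrightarrow> liftQ x p = 0"
  unfolding liftQ_def by simp

lemma liftQ_nonzeroD: "liftQ x p \<noteq> 0 \<Longrightarrow> \<exists>v bs. p = (OV v, map OA bs)"
  using liftQ_not_lifted by blast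

lemma liftQ_cases:
  obtains v bs where "p = (OV v, map OA bs)" | "\<not> (\<exists>v bs. p = (OV v, map OA bs))"
  by blast

lemma liftQ_add:
  fixes x y :: "'v \<times> 'a list \<Rightarrow> 'k::field"
  shows "liftQ (\<lambda>u. x u + y u) = (\<lambda>p. liftQ x p + liftQ y p)"
proof
  fix p show "liftQ (\<lambda>u. x u + y u) p = liftQ x p + liftQ y p"
    by (cases p rule: liftQ_cases) (simp_all add: liftQ_OV liftQ_not_lifted)
qed

lemma liftQ_scale:
  fixes x :: "'v \<times> 'a list \<Rightarrow> 'k::field"
  shows "liftQ (\<lambda>u. c * x u) = (\<lambda>p. c * liftQ x p)"
proof
  fix p show "liftQ (\<lambda>u. c * x u) p = c * liftQ x p"
    by (cases p rule: liftQ_cases) (simp_all add: liftQ_OV liftQ_not_lifted)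
qed

lemma liftQ_zero: "liftQ (\<lambda>u::'v \<times> 'a list. 0::'k::field) = (\<lambda>p. 0)"
proof
  fix p show "liftQ (\<lambda>u. 0) p = 0"
    by (cases p rule: liftQ_cases) (simp_all add: liftQ_OV liftQ_not_lifted)
qed

lemma chain_from_lift: "chain_from (XS s t) (XT t) (OV v) (map OA bs) = chain_from s t v bs"
  by (induction bs arbitrary: v) auto

lemma ptgt_lift: "ptgt (XT t) (OV v, map OA bs) = OV (ptgt t (v, bs))"
  by (cases "bs = []") (auto simp: ptgt_def last_map)

lemma pcat_liftD:
  assumes "pcat u w = (OV v, map OA cs)" "ptgt (XT t) u = psrc w"
  shows "(\<exists>v bs. u = (OV v, map OA bs)) \<and> (\<exists>v bs. w = (OV v, map OA bs))"
proof -
  have 1: "fst u = OV v" "snd u @ snd w = map OA cs" using assms(1) by (auto simp: pcat_def)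
  obtain c1 c2 where c: "snd u = map OA c1" "snd w = map OA c2" using 1(2)[symmetric] by (metis map_eq_append_conv)
  have u: "u = (OV v, map OA c1)" using 1(1) c(1) by (simp add: prod_eq_iff)
  have "fst w = ptgt (XT t) u" using assms(2) by (simp add: psrc_def)
  also have "\<dots> = OV (ptgt t (v, c1))" unfolding u by (rule ptgt_lift)
  finally have "w = (OV (ptgt t (v, c1)), map OA c2)" using c(2) by (simp add: prod_eq_iff)
  then show ?thesis using u by blast
qed

lemma subspace_liftQ_image:
  fixes C :: "('v \<times> 'a list \<Rightarrow> 'k::field) set"
  assumes sC: "subspace C"
  shows "subspace ((liftQ ` C) :: (('v, 'a, 'k) bpath \<Rightarrow> 'k) set)"
  unfolding subspace_def
proof (intro conjI ballI allI)
  have "liftQ (\<lambda>u. 0) \<in> liftQ ` C" using subspace_zero[OF sC] by (rule imageI)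
  then show "(\<lambda>u. 0) \<in> liftQ ` C" unfolding liftQ_zero .
next
  fix x y assume "x \<in> liftQ ` C" "y \<in> liftQ ` C"
  then obtain x' y' where "x' \<in> C" "y' \<in> C" "x = liftQ x'" "y = liftQ y'" by blast
  then have "liftQ (\<lambda>u. x' u + y' u) \<in> liftQ ` C" using subspace_add[OF sC] by blast
  then show "(\<lambda>u. x u + y u) \<in> liftQ ` C" unfolding liftQ_add \<open>x = liftQ x'\<close> \<open>y = liftQ y'\<close> .
next
  fix c x assume "x \<in> liftQ ` C"
  then obtain x' where "x' \<in> C" "x = liftQ x'" by blast
  then have "liftQ (\<lambda>u. c * x' u) \<in> liftQ ` C" using subspace_scale[OF sC] by blast
  then show "(\<lambda>u. c * x u) \<in> liftQ ` C" unfolding liftQ_scale \<open>x = liftQ x'\<close> .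
qed

lemma liftQ_in_pathvec:
  fixes x :: "'v \<times> 'a list \<Rightarrow> 'k::field"
  assumes xP: "x \<in> pathvec V A s t"
  shows "liftQ x \<in> pathvec (OV ` V) (OA ` A) (XS s t) (XT t)"
proof -
  have "{p. liftQ x p \<noteq> 0} \<subseteq> (\<lambda>(v, bs). (OV v, map OA bs)) ` {p. x p \<noteq> 0}"
  proof
    fix p assume p: "p \<in> {p. liftQ x p \<noteq> 0}"
    then obtain v bs where "p = (OV v, map OA bs)" using liftQ_nonzeroD p by blast
    then show "p \<in> (\<lambda>(v, bs). (OV v, map OA bs)) ` {p. x p \<noteq> 0}" using p by (auto simp: liftQ_OV)
  qed
  then have "fin_supp (liftQ x)" using xP unfolding pathvec_def fin_supp_def by (auto intro: finite_subset)
  moreover have "is_path (OV ` V) (OA ` A) (XS s t) (XT t) p" if nz: "liftQ x p \<noteq> 0" for p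
  proof -
    obtain v bs where p: "p = (OV v, map OA bs)" using liftQ_nonzeroD[OF nz] by blast
    have "x (v, bs) \<noteq> 0" using nz p by (simp add: liftQ_OV)
    then have "is_path V A s t (v, bs)" using xP unfolding pathvec_def by blast
    then show ?thesis unfolding p is_path_def by (auto simp: chain_from_lift)
  qed
  ultimately show ?thesis unfolding pathvec_def by blast
qed

lemma comult_liftQ:
  fixes x :: "'v \<times> 'a list \<Rightarrow> 'k::field"
  assumes K: "comult t x = (\<lambda>(u, w). \<Sum>i\<in>K. a i u * b i w)"
  shows "comult (XT t) (liftQ x) = (\<lambda>(u, w). \<Sum>i\<in>K. liftQ (a i) u * liftQ (b i) w)"
proof
  fix uw :: "('v, 'a, 'k) bpath \<times> ('v, 'a, 'k) bpath"
  obtain u w where uw: "uw = (u, w)" by (rule prod.exhaust)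
  show "comult (XT t) (liftQ x) uw = (\<lambda>(u, w). \<Sum>i\<in>K. liftQ (a i) u * liftQ (b i) w) uw"
  proof (cases "(\<exists>v bs. u = (OV v, map OA bs)) \<and> (\<exists>v bs. w = (OV v, map OA bs))")
    case True
    then obtain v bs v' bs' where u: "u = (OV v, map OA bs)" and w: "w = (OV v', map OA bs')" by blast
    have "(\<Sum>i\<in>K. liftQ (a i) u * liftQ (b i) w) = (\<Sum>i\<in>K. a i (v, bs) * b i (v', bs'))"
      by (simp add: u w liftQ_OV)
    also have "\<dots> = comult t x ((v, bs), (v', bs'))" using fun_cong[OF K, of "((v, bs), (v', bs'))"] by simp
    also have "\<dots> = comult (XT t) (liftQ x) (u, w)"
      unfolding u w comult_def by (simp add: ptgt_lift psrc_def pcat_def liftQ_OV flip: map_append)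
    finally show ?thesis unfolding uw by simp
  next
    case False
    have "liftQ (a i) u * liftQ (b i) w = 0" for i using False by (auto simp: liftQ_not_lifted)
    then have "(\<lambda>(u, w). \<Sum>i\<in>K. liftQ (a i) u * liftQ (b i) w) uw = 0" unfolding uw by (simp add: sum.neutral)
    moreover have "comult (XT t) (liftQ x) (u, w) = 0"
    proof (cases "ptgt (XT t) u = psrc w")
      case True
      have "\<not> (\<exists>v bs. pcat u w = (OV v, map OA bs))" using pcat_liftD[OF _ True] False by blast
      then show ?thesis by (simp add: comult_def liftQ_not_lifted)
    qed (simp add: comult_def)
    ultimately show ?thesis unfolding uw by simp
  qed
qed

lemma quiver_subcoalgebra_liftQ:
  fixes C :: "('v \<times> 'a list \<Rightarrow> 'k::field) set"
  assumes "quiver_subcoalgebra V A s t C"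
  shows "quiver_subcoalgebra (OV ` V) (OA ` A) (XS s t) (XT t) (liftQ ` C)"
proof -
  have Q: "\<forall>a\<in>A. t a \<in> V" and subC: "subcoalgebra t (pathvec V A s t) C"
    using assms unfolding quiver_subcoalgebra_def by auto
  have sC: "subspace C" using subC by (rule subcoalgebra_subspace)
  have "comult (XT t) y \<in> tensor (liftQ ` C) (liftQ ` C)" if y: "y \<in> liftQ ` C" for y
  proof -
    obtain x where x: "x \<in> C" "y = liftQ x" using y by blast
    have "comult t x \<in> tensor C C" using subC x unfolding subcoalgebra_def by blast
    then obtain K :: "(('v \<times> 'a list) \<times> ('v \<times> 'a list) \<Rightarrow> 'k) set" and a b where
      K: "finite K" "\<forall>i\<in>K. a i \<in> C \<and> b i \<in> C" "comult t x = (\<lambda>(u, w). \<Sum>i\<in>K. a i u * b i w)"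
      by (rule tensor_obtain_sum[OF sC])
    have "(\<lambda>(u, w). \<Sum>i\<in>K. liftQ (a i) u * liftQ (b i) w) \<in> tensor (liftQ ` C) (liftQ ` C)"
      by (rule tensor_sum[OF K(1)]) (use K(2) in blast)
    then show ?thesis unfolding x(2) comult_liftQ[OF K(3)] .
  qed
  moreover have "liftQ ` C \<subseteq> pathvec (OV ` V) (OA ` A) (XS s t) (XT t)"
    using subC liftQ_in_pathvec unfolding subcoalgebra_def by blast
  moreover have "\<forall>a\<in>OA ` A. XT t a \<in> OV ` V" using Q by auto
  ultimately show ?thesis
    unfolding quiver_subcoalgebra_def subcoalgebra_def using subspace_liftQ_image[OF sC] by blast
qed

lemma fmember_enc:
  assumes "fin_supp x"
  shows "(z |\<in>| enc x) = (x (fst z) \<noteq> 0 \<and> snd z = x (fst z))"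
proof -
  have S: "{(p, x p) | p. x p \<noteq> 0} = (\<lambda>p. (p, x p)) ` {p. x p \<noteq> 0}" by auto
  have "finite {(p, x p) | p. x p \<noteq> 0}" unfolding S using assms unfolding fin_supp_def by simp
  then have "fset (enc x) = {(p, x p) | p. x p \<noteq> 0}" unfolding enc_def by (simp add: Abs_fset_inverse)
  then show ?thesis by (cases z) auto
qed

lemma enc_inj:
  assumes "fin_supp x" "fin_supp y" "enc x = enc y" shows "x = y"
proof
  fix u
  show "x u = y u"
  proof (cases "x u = 0")
    case True
    show ?thesis
    proof (rule ccontr)
      assume "x u \<noteq> y u"
      then have "(u, y u) |\<in>| enc y" using True fmember_enc[OF assms(2)] by simp
      then have "(u, y u) |\<in>| enc x" using assms(3) by simp
      then show False using True fmember_enc[OF assms(1)] by simp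
    qed
  next
    case False
    then have "(u, x u) |\<in>| enc x" using fmember_enc[OF assms(1)] by simp
    then have "(u, x u) |\<in>| enc y" using assms(3) by simp
    then show ?thesis using fmember_enc[OF assms(2)] by simp
  qed
qed

lemma qF_nonzeroD:
  assumes "qF n F r \<noteq> 0"
  shows "\<exists>p\<in>F. snd r \<noteq> [] \<and> last (snd r) = NA n (enc p) (encF F) \<and> p (fst r, butlast (snd r)) \<noteq> 0"
proof (rule ccontr)
  assume "\<not> ?thesis"
  then have "qF n F r = 0" unfolding qF_def by (intro sum.neutral) auto
  then show False using assms by simp
qed

text \<open>XS reads the source of a new arrow off an arbitrary (SOME) path of its multipath; this is
  well defined because all those paths share their target.\<close>

lemma XS_NA:
  assumes fs: "fin_supp p" and mp: "multipath (XT t) p" and q: "p q \<noteq> 0"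
  shows "XS s t (NA m (enc p) G) = ptgt (XT t) q"
proof -
  obtain v w where vw: "\<forall>u. p u \<noteq> 0 \<longrightarrow> psrc u = v \<and> ptgt (XT t) u = w" using mp unfolding multipath_def by blast
  have "(q, p q) |\<in>| enc p" using fmember_enc[OF fs] q by simp
  then have "\<exists>z. z |\<in>| enc p" by blast
  then have "(SOME z. z |\<in>| enc p) |\<in>| enc p" by (rule someI_ex)
  then have "p (fst (SOME z. z |\<in>| enc p)) \<noteq> 0" using fmember_enc[OF fs] by simp
  then have "ptgt (XT t) (fst (SOME z. z |\<in>| enc p)) = w" using vw by blast
  moreover have "ptgt (XT t) q = w" using vw q by blast
  ultimately show ?thesis by simp
qed

lemma rquot_qF:
  assumes Ffin: "finite F" and Fmp: "\<forall>p\<in>F. multipath (XT t) p" and f: "f \<in> F"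
    and w: "\<forall>u. f u \<noteq> 0 \<longrightarrow> ptgt (XT t) u = w"
  shows "rquot (XT t) (qF n F) (w, [NA n (enc f) (encF F)]) = f"
proof
  fix u
  have fs: "fin_supp p" if "p \<in> F" for p using Fmp that unfolding multipath_def by blast
  have eqp: "(enc f = enc p) = (p = f)" if p: "p \<in> F" for p
    using enc_inj[OF fs[OF p] fs[OF f]] by auto
  have "qF n F (pcat u (w, [NA n (enc f) (encF F)])) = (\<Sum>p\<in>F. if p = f then p u else 0)"
    unfolding qF_def pcat_def by (intro sum.cong refl) (simp add: eqp)
  also have "\<dots> = f u" using Ffin f by (simp add: sum.delta')
  finally have e: "qF n F (pcat u (w, [NA n (enc f) (encF F)])) = f u" .
  show "rquot (XT t) (qF n F) (w, [NA n (enc f) (encF F)]) u = f u"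
  proof (cases "ptgt (XT t) u = w")
    case True then show ?thesis unfolding rquot_def comult_def using e by (simp add: psrc_def)
  next
    case False
    then have "f u = 0" using w by blast
    then show ?thesis unfolding rquot_def comult_def using False by (simp add: psrc_def)
  qed
qed

lemma fin_supp_qF:
  assumes "finite F" "\<forall>p\<in>F. fin_supp p"
  shows "fin_supp (qF n F)"
proof -
  have "{r. qF n F r \<noteq> 0} \<subseteq> (\<Union>p\<in>F. (\<lambda>q. (fst q, snd q @ [NA n (enc p) (encF F)])) ` {q. p q \<noteq> 0})"
  proof
    fix r assume "r \<in> {r. qF n F r \<noteq> 0}"
    then obtain p where p: "p \<in> F" "snd r \<noteq> []" "last (snd r) = NA n (enc p) (encF F)"
        "p (fst r, butlast (snd r)) \<noteq> 0"
      using qF_nonzeroD by blast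
    have "r = (fst (fst r, butlast (snd r)), snd (fst r, butlast (snd r)) @ [NA n (enc p) (encF F)])"
      using p(2,3) append_butlast_last_id[OF p(2)] by (simp add: prod_eq_iff)
    then show "r \<in> (\<Union>p\<in>F. (\<lambda>q. (fst q, snd q @ [NA n (enc p) (encF F)])) ` {q. p q \<noteq> 0})"
      using p(1,4) by blast
  qed
  moreover have "finite (\<Union>p\<in>F. (\<lambda>q. (fst q, snd q @ [NA n (enc p) (encF F)])) ` {q. p q \<noteq> 0})"
    using assms unfolding fin_supp_def by blast
  ultimately show ?thesis unfolding fin_supp_def by (rule finite_subset)
qed

lemma is_path_snoc:
  assumes "is_path V A s t q" "a \<in> A" "s a = ptgt t q"
  shows "is_path V A s t (fst q, snd q @ [a])"
  using assms unfolding is_path_def ptgt_def by (simp add: chain_from_append)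

lemma qF_in_pathvec:
  assumes F: "finite F" "independent (XT t) D F" and D: "D \<subseteq> pathvec V A (XS s t) (XT t)"
    and A': "A \<subseteq> A'" "\<forall>p\<in>F. NA n (enc p) (encF F) \<in> A'" and V': "V \<subseteq> V'"
  shows "qF n F \<in> pathvec V' A' (XS s t) (XT t)"
proof -
  have mp: "multipath (XT t) p" and pP: "p \<in> pathvec V A (XS s t) (XT t)" if "p \<in> F" for p
    using F(2) D that unfolding independent_def MP_def by auto
  have fs: "fin_supp p" if "p \<in> F" for p using mp[OF that] unfolding multipath_def by blast
  have "is_path V' A' (XS s t) (XT t) r" if nz: "qF n F r \<noteq> 0" for r
  proof -
    obtain p where p: "p \<in> F" "snd r \<noteq> []" "last (snd r) = NA n (enc p) (encF F)"
        "p (fst r, butlast (snd r)) \<noteq> 0"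
      using qF_nonzeroD[OF nz] by blast
    let ?q = "(fst r, butlast (snd r))"
    have "is_path V A (XS s t) (XT t) ?q" using pP[OF p(1)] p(4) unfolding pathvec_def by blast
    then have "is_path V' A' (XS s t) (XT t) ?q"
      using A'(1) V' unfolding is_path_def by auto
    moreover have "XS s t (NA n (enc p) (encF F)) = ptgt (XT t) ?q"
      by (rule XS_NA[OF fs[OF p(1)] mp[OF p(1)] p(4)])
    ultimately have "is_path V' A' (XS s t) (XT t) (fst ?q, snd ?q @ [NA n (enc p) (encF F)])"
      using is_path_snoc A'(2) p(1) by metis
    moreover have "r = (fst ?q, snd ?q @ [NA n (enc p) (encF F)])"
      using p(2,3) append_butlast_last_id[OF p(2)] by (simp add: prod_eq_iff)
    ultimately show ?thesis by simp
  qed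
  then show ?thesis using fin_supp_qF[OF F(1)] fs unfolding pathvec_def by blast
qed

lemma subcoalgebra_gen_subcoalg:
  assumes "subcoalgebra t K K" "G \<subseteq> K"
  shows "subcoalgebra t K (gen_subcoalg t K G)"
  unfolding gen_subcoalg_def by (rule subcoalgebra_Inter) (use assms in blast)+

lemma quiver_subcoalgebra_tail_step:
  fixes Vn :: "('v, 'a, 'k::field) vtx set" and An :: "('v, 'a, 'k) arr set"
    and Dn :: "(('v, 'a, 'k) bpath \<Rightarrow> 'k) set" and n :: nat
  assumes inv: "quiver_subcoalgebra Vn An (XS s t) (XT t) Dn"
  defines "Fs \<equiv> {F. finite F \<and> independent (XT t) Dn F}"
  defines "V' \<equiv> Vn \<union> {NV n (encF F) | F. F \<in> Fs}"
  defines "A' \<equiv> An \<union> {NA n (enc p) (encF F) | F p. F \<in> Fs \<and> p \<in> F}"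
  shows "quiver_subcoalgebra V' A' (XS s t) (XT t)
           (gen_subcoalg (XT t) (pathvec V' A' (XS s t) (XT t)) (Dn \<union> {qF n F | F. F \<in> Fs}))"
proof -
  have Qn: "\<forall>a\<in>An. XT t a \<in> Vn" and scn: "subcoalgebra (XT t) (pathvec Vn An (XS s t) (XT t)) Dn"
    using inv unfolding quiver_subcoalgebra_def by auto
  have Q': "\<forall>a\<in>A'. XT t a \<in> V'" using Qn unfolding A'_def V'_def by auto
  have VV: "Vn \<subseteq> V'" and AA: "An \<subseteq> A'" unfolding V'_def A'_def by blast+
  have DP: "Dn \<subseteq> pathvec Vn An (XS s t) (XT t)" using scn unfolding subcoalgebra_def by blast
  have "qF n F \<in> pathvec V' A' (XS s t) (XT t)" if F: "F \<in> Fs" for F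
    by (rule qF_in_pathvec[OF _ _ DP AA _ VV]) (use F in \<open>auto simp: Fs_def A'_def\<close>)
  moreover have "Dn \<subseteq> pathvec V' A' (XS s t) (XT t)" using DP pathvec_mono[OF VV AA] by blast
  ultimately have "Dn \<union> {qF n F | F. F \<in> Fs} \<subseteq> pathvec V' A' (XS s t) (XT t)" by blast
  with Q' show ?thesis
    unfolding quiver_subcoalgebra_def by (blast intro: subcoalgebra_gen_subcoalg subcoalgebra_pathvec)
qed

lemma quiver_subcoalgebra_TT:
  assumes "quiver_subcoalgebra V A s t C"
  shows "case TT s t V A C n of (Vn, An, Dn) \<Rightarrow> quiver_subcoalgebra Vn An (XS s t) (XT t) Dn"
proof (induction n)
  case 0
  then show ?case using quiver_subcoalgebra_liftQ[OF assms] by simp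
next
  case (Suc n)
  obtain Vn An Dn where eq: "TT s t V A C n = (Vn, An, Dn)" by (rule prod_cases3)
  then have "quiver_subcoalgebra Vn An (XS s t) (XT t) Dn" using Suc by simp
  from quiver_subcoalgebra_tail_step[OF this, of n] show ?case by (simp add: eq Let_def)
qed

lemma subcoalgebra_TCn:
  assumes "quiver_subcoalgebra V A s t C"
  shows "\<exists>Vn An. subcoalgebra (XT t) (pathvec Vn An (XS s t) (XT t)) (TCn s t V A C n)"
  using quiver_subcoalgebra_TT[OF assms, of n]
  unfolding TCn_def quiver_subcoalgebra_def by (auto split: prod.splits)

lemma TCn_Suc: "TCn s t V A C n \<subseteq> TCn s t V A C (Suc n)"
proof -
  obtain Vn An Dn where eq: "TT s t V A C n = (Vn, An, Dn)" by (rule prod_cases3)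
  show ?thesis unfolding TCn_def by (simp add: Let_def eq gen_subcoalg_def) blast
qed

lemma TCn_mono: "m \<le> n \<Longrightarrow> TCn s t V A C m \<subseteq> TCn s t V A C n"
  by (induction n rule: dec_induct) (auto intro: TCn_Suc[THEN subsetD])

lemma finite_subset_TCn:
  assumes "finite X" "X \<subseteq> TC s t V A C"
  shows "\<exists>N. X \<subseteq> TCn s t V A C N"
  using assms
proof (induction X rule: finite_induct)
  case empty
  then show ?case by blast
next
  case (insert x X)
  then obtain N1 where N1: "X \<subseteq> TCn s t V A C N1" by blast
  obtain N2 where N2: "x \<in> TCn s t V A C N2" using insert(4) unfolding TC_def by blast
  have "insert x X \<subseteq> TCn s t V A C (max N1 N2)"
    using N1 N2 TCn_mono[of N1 "max N1 N2" s t V A C] TCn_mono[of N2 "max N1 N2" s t V A C] by auto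
  then show ?case by blast
qed

lemma right_coideal_qF_contains:
  assumes "finite F" "\<forall>p\<in>F. multipath (XT t) p" "right_coideal (XT t) D J" "qF n F \<in> J" "f \<in> F"
  shows "f \<in> J"
proof -
  obtain w where "\<forall>u. f u \<noteq> 0 \<longrightarrow> ptgt (XT t) u = w"
    using assms(2,5) unfolding multipath_def by blast
  then have "rquot (XT t) (qF n F) (w, [NA n (enc f) (encF F)]) = f"
    by (rule rquot_qF[OF assms(1,2,5)])
  then show ?thesis using right_coideal_rquot[OF assms(3,4), of "(w, [NA n (enc f) (encF F)])"] by simp
qed

theorem proposition4p25:
  fixes V :: "'v set" and A :: "'a set" and s t :: "'a \<Rightarrow> 'v"
    and C :: "('v \<times> 'a list \<Rightarrow> 'k::field) set"
    and I :: "(('v, 'a, 'k) bpath \<Rightarrow> 'k) set"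
  assumes quiver: "\<forall>a\<in>A. s a \<in> V \<and> t a \<in> V"
    and subC: "subcoalgebra t (pathvec V A s t) C"
    and coid: "right_coideal (XT t) (TC s t V A C) I"
    and fd: "fin_dim I"
  shows "\<exists>n F. finite F \<and> independent (XT t) (TCn s t V A C n) F
               \<and> I \<subseteq> coideal_gen (XT t) (TC s t V A C) (qF n F)"
proof -
  obtain B where B: "finite B" "I = lspan B" using fd unfolding fin_dim_def by blast
  have "B \<subseteq> I" unfolding B(2) using lspan_superset by blast
  then have "B \<subseteq> TC s t V A C" using coid unfolding right_coideal_def by blast
  then obtain N where N: "B \<subseteq> TCn s t V A C N" using finite_subset_TCn[OF B(1)] by blast
  have "quiver_subcoalgebra V A s t C" using quiver subC unfolding quiver_subcoalgebra_def by blast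
  then obtain Vn An where sc: "subcoalgebra (XT t) (pathvec Vn An (XS s t) (XT t)) (TCn s t V A C N)"
    using subcoalgebra_TCn by blast
  obtain F where F: "finite F" "independent (XT t) (TCn s t V A C N) F" "B \<subseteq> rquot_hull (XT t) F"
    using exists_independent_spanning[OF sc _ B(1) N] unfolding pathvec_def by blast
  have "I \<subseteq> J" if J: "right_coideal (XT t) (TC s t V A C) J" "qF N F \<in> J" for J
  proof -
    have "F \<subseteq> J"
      using right_coideal_qF_contains[OF F(1) _ J] F(2) unfolding independent_def MP_def by blast
    then have "rquot_hull (XT t) F \<subseteq> J" by (rule rquot_hull_subset_right_coideal[OF J(1)])
    moreover have "subspace J" using J(1) unfolding right_coideal_def by blast
    ultimately show "I \<subseteq> J" unfolding B(2) using F(3) lspan_least by (meson subset_trans)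
  qed
  then show ?thesis unfolding coideal_gen_def using F(1,2) by blast
qed

end
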